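(* Let $Q$ be a latin quandle and $u\in Q$. If the subquandle $\mathrm{Sg}(u,x,y)$ is simply connected for every $x,y\in Q$, then $Q$ is simply connected.
   Context: A quandle is a set $Q$ with a binary operation $*$ such that every left translation $L_x:y\mapsto x*y$ is bijective, $x*(y*z)=(x*y)*(x*z)$ and $x*x=x$; left division is $x\backslash y=L_x^{-1}(y)$. $Q$ is latin if every right translation $y\mapsto y*x$ is bijective, and connected if $\langle L_x:x\in Q\rangle$ is transitive. $\mathrm{Sg}(u,x,y)$ is the smallest subset of $Q$ containing $u,x,y$ and closed under $*$ and $\backslash$. For a set $S$, a quandle cocycle with values in $\mathrm{Sym}_S$ is $\theta:Q\times Q\to\mathrm{Sym}_S$ with $\theta_{x*y,x*z}\theta_{x,z}=\theta_{x,y*z}\theta_{y,z}$ and $\theta_{x,x}=1$; it is cohomologous to the trivial cocycle if there is $\gamma:Q\to\mathrm{Sym}_S$ with $\theta_{x,y}=\gamma_{x*y}\gamma_y^{-1}$ for all $x,y$. A quandle is simply connected if it is connected and, for every set $S$, every such cocycle is cohomologous to the trivial cocycle. *)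

theory Defs
  imports Main
begin

definition quandle :: "'a set \<Rightarrow> ('a \<Rightarrow> 'a \<Rightarrow> 'a) \<Rightarrow> bool" where
  "quandle Q op \<longleftrightarrow>
     (\<forall>x\<in>Q. \<forall>y\<in>Q. op x y \<in> Q) \<and>
     (\<forall>x\<in>Q. bij_betw (op x) Q Q) \<and>
     (\<forall>x\<in>Q. \<forall>y\<in>Q. \<forall>z\<in>Q. op x (op y z) = op (op x y) (op x z)) \<and>
     (\<forall>x\<in>Q. op x x = x)"

definition ldiv :: "'a set \<Rightarrow> ('a \<Rightarrow> 'a \<Rightarrow> 'a) \<Rightarrow> 'a \<Rightarrow> 'a \<Rightarrow> 'a" where
  "ldiv Q op x y = the_inv_into Q (op x) y"

definition latin :: "'a set \<Rightarrow> ('a \<Rightarrow> 'a \<Rightarrow> 'a) \<Rightarrow> bool" where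
  "latin Q op \<longleftrightarrow> quandle Q op \<and> (\<forall>x\<in>Q. bij_betw (\<lambda>y. op y x) Q Q)"

text \<open>The group generated by the left translations L_x (x in Q), acting on Q;
  elements are represented as maps (only their values on Q matter).\<close>
inductive_set LMlt :: "'a set \<Rightarrow> ('a \<Rightarrow> 'a \<Rightarrow> 'a) \<Rightarrow> ('a \<Rightarrow> 'a) set"
  for Q :: "'a set" and op :: "'a \<Rightarrow> 'a \<Rightarrow> 'a" where
  LMlt_id: "id \<in> LMlt Q op"
| LMlt_L: "g \<in> LMlt Q op \<Longrightarrow> x \<in> Q \<Longrightarrow> op x \<circ> g \<in> LMlt Q op"
| LMlt_Linv: "g \<in> LMlt Q op \<Longrightarrow> x \<in> Q \<Longrightarrow> ldiv Q op x \<circ> g \<in> LMlt Q op"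

definition connected_quandle :: "'a set \<Rightarrow> ('a \<Rightarrow> 'a \<Rightarrow> 'a) \<Rightarrow> bool" where
  "connected_quandle Q op \<longleftrightarrow> quandle Q op \<and>
     (\<forall>a\<in>Q. \<forall>b\<in>Q. \<exists>g\<in>LMlt Q op. g a = b)"

inductive_set Sg :: "'a set \<Rightarrow> ('a \<Rightarrow> 'a \<Rightarrow> 'a) \<Rightarrow> 'a set \<Rightarrow> 'a set"
  for Q :: "'a set" and op :: "'a \<Rightarrow> 'a \<Rightarrow> 'a" and A :: "'a set" where
  Sg_gen: "a \<in> A \<Longrightarrow> a \<in> Sg Q op A"
| Sg_op: "a \<in> Sg Q op A \<Longrightarrow> b \<in> Sg Q op A \<Longrightarrow> op a b \<in> Sg Q op A"
| Sg_ldiv: "a \<in> Sg Q op A \<Longrightarrow> b \<in> Sg Q op A \<Longrightarrow> ldiv Q op a b \<in> Sg Q op A"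

text \<open>Quandle cocycles with values in Sym_S: theta x y is a permutation of S
  (represented as a map, only its values on S matter).\<close>
definition quandle_cocycle ::
  "'a set \<Rightarrow> ('a \<Rightarrow> 'a \<Rightarrow> 'a) \<Rightarrow> 's set \<Rightarrow> ('a \<Rightarrow> 'a \<Rightarrow> 's \<Rightarrow> 's) \<Rightarrow> bool" where
  "quandle_cocycle Q op S \<theta> \<longleftrightarrow>
     (\<forall>x\<in>Q. \<forall>y\<in>Q. bij_betw (\<theta> x y) S S) \<and>
     (\<forall>x\<in>Q. \<forall>y\<in>Q. \<forall>z\<in>Q. \<forall>s\<in>S.
        \<theta> (op x y) (op x z) (\<theta> x z s) = \<theta> x (op y z) (\<theta> y z s)) \<and>
     (\<forall>x\<in>Q. \<forall>s\<in>S. \<theta> x x s = s)"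

definition cohomologous_trivial ::
  "'a set \<Rightarrow> ('a \<Rightarrow> 'a \<Rightarrow> 'a) \<Rightarrow> 's set \<Rightarrow> ('a \<Rightarrow> 'a \<Rightarrow> 's \<Rightarrow> 's) \<Rightarrow> bool" where
  "cohomologous_trivial Q op S \<theta> \<longleftrightarrow>
     (\<exists>\<gamma> :: 'a \<Rightarrow> 's \<Rightarrow> 's. (\<forall>x\<in>Q. bij_betw (\<gamma> x) S S) \<and>
        (\<forall>x\<in>Q. \<forall>y\<in>Q. \<forall>s\<in>S. \<theta> x y s = \<gamma> (op x y) (inv_into S (\<gamma> y) s)))"

text \<open>Simple connectedness, relative to sets S of a fixed (arbitrary) type 's.\<close>
definition simply_connected :: "'s itself \<Rightarrow> 'a set \<Rightarrow> ('a \<Rightarrow> 'a \<Rightarrow> 'a) \<Rightarrow> bool" where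
  "simply_connected (_ :: 's itself) Q op \<longleftrightarrow> connected_quandle Q op \<and>
     (\<forall>(S :: 's set) \<theta>. quandle_cocycle Q op S \<theta> \<longrightarrow> cohomologous_trivial Q op S \<theta>)"

end

theory Submission
  imports Defs
begin

text \<open>Restricted to each subquandle Sg(u,x,y) the cocycle is a coboundary, and the trivialising
  cochain can be normalised to be the identity at u. On a connected quandle a normalised
  trivialisation is unique: for two of them, b \<mapsto> \<gamma>' b\<inverse> \<circ> \<gamma> b is invariant under all left
  translations, hence constant, hence equal to its value at u, the identity. So the normalised
  trivialisation of Sg(u,z,z) agrees at z with that of every Sg(u,x,y) containing z, and its
  values at z, for z in Q, form one trivialisation on all of Q.\<close>

lemma quandle_ldiv:
  assumes "quandle Q op" "x \<in> Q" "y \<in> Q"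
  shows quandle_ldiv_closed: "ldiv Q op x y \<in> Q" and quandle_op_ldiv: "op x (ldiv Q op x y) = y"
proof -
  have "bij_betw (op x) Q Q" using assms by (simp add: quandle_def)
  then show "ldiv Q op x y \<in> Q" "op x (ldiv Q op x y) = y"
    using assms(3) unfolding ldiv_def by (auto simp: bij_betw_def the_inv_into_into f_the_inv_into_f)
qed

lemma latin_connected_quandle:
  assumes "latin Q op"
  shows "connected_quandle Q op"
  unfolding connected_quandle_def
proof (intro conjI ballI)
  show "quandle Q op" using assms by (simp add: latin_def)
  fix a b assume "a \<in> Q" "b \<in> Q"
  moreover have "bij_betw (\<lambda>y. op y a) Q Q" using assms \<open>a \<in> Q\<close> by (simp add: latin_def)
  ultimately obtain c where "c \<in> Q" "op c a = b" by (metis bij_betw_imp_surj_on imageE)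
  moreover from \<open>c \<in> Q\<close> have "op c \<circ> id \<in> LMlt Q op"
    by (rule LMlt_L[OF LMlt_id])
  ultimately show "\<exists>g\<in>LMlt Q op. g a = b" by force
qed

lemma connected_quandle_translation_invariant_const:
  assumes conn: "connected_quandle P op"
    and invariant: "\<And>a b. a \<in> P \<Longrightarrow> b \<in> P \<Longrightarrow> f (op a b) = f b"
    and "a \<in> P" "b \<in> P"
  shows "f a = f b"
proof -
  have q: "quandle P op" using conn by (simp add: connected_quandle_def)
  have "g b \<in> P \<and> f (g b) = f b" if "g \<in> LMlt P op" "b \<in> P" for g b
    using that
  proof (induction arbitrary: b rule: LMlt.induct)
    case LMlt_id
    then show ?case by simp
  next
    case (LMlt_L g x)
    then show ?case using q invariant by (simp add: quandle_def)
  next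
    case (LMlt_Linv g x)
    then have "g b \<in> P" "f (g b) = f b" by simp_all
    then show ?case
      using invariant[OF \<open>x \<in> P\<close> quandle_ldiv_closed[OF q \<open>x \<in> P\<close>]]
      by (simp add: quandle_ldiv_closed[OF q \<open>x \<in> P\<close>] quandle_op_ldiv[OF q \<open>x \<in> P\<close>])
  qed
  moreover obtain g where "g \<in> LMlt P op" "g b = a"
    using conn assms(3,4) by (auto simp: connected_quandle_def)
  ultimately show ?thesis using assms(4) by blast
qed

lemma Sg_subset:
  assumes "quandle Q op" "A \<subseteq> Q"
  shows "Sg Q op A \<subseteq> Q"
proof
  fix x assume "x \<in> Sg Q op A"
  then show "x \<in> Q"
  proof induction
    case (Sg_op a b)
    then show ?case using assms(1) by (simp add: quandle_def)
  qed (use assms in \<open>auto simp: quandle_ldiv_closed\<close>)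
qed

lemma Sg_minimal:
  assumes "A \<subseteq> Sg Q op B"
  shows "Sg Q op A \<subseteq> Sg Q op B"
proof
  fix x assume "x \<in> Sg Q op A"
  then show "x \<in> Sg Q op B"
    by induction (use assms in \<open>auto intro: Sg.intros\<close>)
qed

lemma quandle_cocycle_subset:
  "quandle_cocycle Q op S \<theta> \<Longrightarrow> P \<subseteq> Q \<Longrightarrow> quandle_cocycle P op S \<theta>"
  unfolding quandle_cocycle_def by blast

definition trivializes ::
  "'a set \<Rightarrow> ('a \<Rightarrow> 'a \<Rightarrow> 'a) \<Rightarrow> 's set \<Rightarrow> ('a \<Rightarrow> 'a \<Rightarrow> 's \<Rightarrow> 's) \<Rightarrow> ('a \<Rightarrow> 's \<Rightarrow> 's) \<Rightarrow> bool" where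
  "trivializes P op S \<theta> \<gamma> \<longleftrightarrow>
     (\<forall>x\<in>P. bij_betw (\<gamma> x) S S) \<and>
     (\<forall>x\<in>P. \<forall>y\<in>P. \<forall>s\<in>S. \<theta> x y s = \<gamma> (op x y) (inv_into S (\<gamma> y) s))"

lemma cohomologous_trivial_iff_trivializes:
  "cohomologous_trivial P op S \<theta> \<longleftrightarrow> (\<exists>\<gamma>. trivializes P op S \<theta> \<gamma>)"
  by (simp add: cohomologous_trivial_def trivializes_def)

lemma trivializes_subset:
  "trivializes Q op S \<theta> \<gamma> \<Longrightarrow> P \<subseteq> Q \<Longrightarrow> trivializes P op S \<theta> \<gamma>"
  unfolding trivializes_def by blast

lemma trivializes_cong:
  assumes triv: "trivializes P op S \<theta> \<gamma>"
    and agree: "\<And>x s. x \<in> P \<Longrightarrow> s \<in> S \<Longrightarrow> \<gamma>' x s = \<gamma> x s"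
    and closed: "\<And>x y. x \<in> P \<Longrightarrow> y \<in> P \<Longrightarrow> op x y \<in> P"
  shows "trivializes P op S \<theta> \<gamma>'"
  unfolding trivializes_def
proof (intro conjI ballI)
  fix x assume "x \<in> P"
  then show "bij_betw (\<gamma>' x) S S"
    using triv agree by (simp add: trivializes_def cong: bij_betw_cong)
  fix y s assume y: "y \<in> P" and s: "s \<in> S"
  have bij: "bij_betw (\<gamma> y) S S" "bij_betw (\<gamma>' y) S S"
    using triv agree y by (simp_all add: trivializes_def cong: bij_betw_cong)
  let ?t = "inv_into S (\<gamma> y) s"
  have t: "?t \<in> S"
    using bij(1) s by (meson bij_betw_apply bij_betw_inv_into)
  have "\<gamma>' y ?t = s"
    using agree[OF y t] bij(1) s by (simp add: bij_betw_inv_into_right)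
  then have "inv_into S (\<gamma>' y) s = ?t"
    by (rule inv_into_f_eq[OF bij_betw_imp_inj_on[OF bij(2)] t])
  then show "\<theta> x y s = \<gamma>' (op x y) (inv_into S (\<gamma>' y) s)"
    using triv \<open>x \<in> P\<close> y s t agree[OF closed[OF \<open>x \<in> P\<close> y] t] by (simp add: trivializes_def)
qed

lemma trivializes_normalized_at:
  assumes triv: "trivializes P op S \<theta> \<gamma>" and u: "u \<in> P"
  shows "\<exists>\<gamma>'. trivializes P op S \<theta> \<gamma>' \<and> (\<forall>s\<in>S. \<gamma>' u s = s)"
proof -
  define \<gamma>' where "\<gamma>' x = \<gamma> x \<circ> inv_into S (\<gamma> u)" for x
  have bij: "bij_betw (\<gamma> x) S S" if "x \<in> P" for x
    using triv that by (simp add: trivializes_def)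
  have bij': "bij_betw (\<gamma>' x) S S" if "x \<in> P" for x
    using bij[OF that] bij_betw_inv_into[OF bij[OF u]] unfolding \<gamma>'_def by (rule bij_betw_trans[rotated])
  have normalized: "\<gamma>' u s = s" if "s \<in> S" for s
    using bij[OF u] that by (simp add: \<gamma>'_def bij_betw_inv_into_right)
  have inv_mem: "inv_into S (\<gamma> y) s \<in> S" if "y \<in> P" "s \<in> S" for y s
    using bij[OF that(1)] that(2) by (meson bij_betw_apply bij_betw_inv_into)
  have inv': "inv_into S (\<gamma>' y) s = \<gamma> u (inv_into S (\<gamma> y) s)" if y: "y \<in> P" and s: "s \<in> S" for y s
  proof (rule inv_into_f_eq[OF bij_betw_imp_inj_on[OF bij'[OF y]]])
    note t = inv_mem[OF y s]
    show "\<gamma> u (inv_into S (\<gamma> y) s) \<in> S"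
      by (rule bij_betw_apply[OF bij[OF u] t])
    show "\<gamma>' y (\<gamma> u (inv_into S (\<gamma> y) s)) = s"
      using bij[OF u] bij[OF y] s t by (simp add: \<gamma>'_def bij_betw_inv_into_left bij_betw_inv_into_right)
  qed
  have "\<theta> x y s = \<gamma>' (op x y) (inv_into S (\<gamma>' y) s)" if "x \<in> P" "y \<in> P" "s \<in> S" for x y s
    using triv that inv'[OF that(2,3)] bij_betw_inv_into_left[OF bij[OF u] inv_mem[OF that(2,3)]]
    by (simp add: trivializes_def \<gamma>'_def)
  with bij' normalized show ?thesis
    by (auto simp: trivializes_def)
qed

lemma normalized_trivialization_unique:
  assumes conn: "connected_quandle P op" and u: "u \<in> P"
    and triv: "trivializes P op S \<theta> \<gamma>" and norm: "\<And>s. s \<in> S \<Longrightarrow> \<gamma> u s = s"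
    and triv': "trivializes P op S \<theta> \<gamma>'" and norm': "\<And>s. s \<in> S \<Longrightarrow> \<gamma>' u s = s"
    and z: "z \<in> P" and s: "s \<in> S"
  shows "\<gamma> z s = \<gamma>' z s"
proof -
  have closed: "op a b \<in> P" if "a \<in> P" "b \<in> P" for a b
    using conn that by (simp add: connected_quandle_def quandle_def)
  have bij: "bij_betw (\<gamma> b) S S" "bij_betw (\<gamma>' b) S S" if "b \<in> P" for b
    using triv triv' that by (simp_all add: trivializes_def)
  define \<eta> where "\<eta> b w = (if w \<in> S then inv_into S (\<gamma>' b) (\<gamma> b w) else w)" for b w
  have "\<eta> (op a b) = \<eta> b" if a: "a \<in> P" and b: "b \<in> P" for a b
  proof (rule ext)
    fix w
    show "\<eta> (op a b) w = \<eta> b w"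
    proof (cases "w \<in> S")
      case True
      have \<gamma>w: "\<gamma> b w \<in> S" using bij(1)[OF b] True by (rule bij_betw_apply)
      have "\<gamma> (op a b) w = \<theta> a b (\<gamma> b w)"
        using triv a b \<gamma>w bij_betw_inv_into_left[OF bij(1)[OF b] True] by (simp add: trivializes_def)
      also have "\<dots> = \<gamma>' (op a b) (inv_into S (\<gamma>' b) (\<gamma> b w))"
        using triv' a b \<gamma>w by (simp add: trivializes_def)
      finally have "inv_into S (\<gamma>' (op a b)) (\<gamma> (op a b) w) = inv_into S (\<gamma>' b) (\<gamma> b w)"
        using bij_betw_inv_into_left[OF bij(2)[OF closed[OF a b]]
            bij_betw_apply[OF bij_betw_inv_into[OF bij(2)[OF b]] \<gamma>w]]
        by simp
      then show ?thesis using True by (simp add: \<eta>_def)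
    qed (simp add: \<eta>_def)
  qed
  then have "\<eta> z = \<eta> u"
    using connected_quandle_translation_invariant_const[OF conn _ z u] by blast
  moreover have "\<eta> u s = s"
    using norm'[OF s] norm[OF s] bij_betw_inv_into_left[OF bij(2)[OF u] s] s by (simp add: \<eta>_def)
  ultimately have "\<eta> z s = s" by simp
  then have "inv_into S (\<gamma>' z) (\<gamma> z s) = s"
    using s by (simp add: \<eta>_def)
  then show ?thesis
    using bij_betw_inv_into_right[OF bij(2)[OF z] bij_betw_apply[OF bij(1)[OF z] s]] by simp
qed

lemma simply_connected_normalized_trivialization:
  fixes S :: "'s set"
  assumes "simply_connected TYPE('s) P op" "quandle_cocycle P op S \<theta>" "u \<in> P"
  shows "\<exists>\<gamma>. trivializes P op S \<theta> \<gamma> \<and> (\<forall>s\<in>S. \<gamma> u s = s)"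
  using assms trivializes_normalized_at
  by (metis simply_connected_def cohomologous_trivial_iff_trivializes)

lemma trivializes_from_subquandles:
  assumes q: "quandle Q op" and u: "u \<in> Q"
    and conn: "\<And>z. z \<in> Q \<Longrightarrow> connected_quandle (Sg Q op {u, z, z}) op"
    and trivial_on_Sg: "\<And>x y. x \<in> Q \<Longrightarrow> y \<in> Q \<Longrightarrow>
      \<exists>\<gamma>. trivializes (Sg Q op {u, x, y}) op S \<theta> \<gamma> \<and> (\<forall>s\<in>S. \<gamma> u s = s)"
  shows "\<exists>\<Gamma>. trivializes Q op S \<theta> \<Gamma>"
proof -
  define N where "N z = (SOME \<gamma>. trivializes (Sg Q op {u, z, z}) op S \<theta> \<gamma> \<and> (\<forall>s\<in>S. \<gamma> u s = s))"
    for z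
  have N: "trivializes (Sg Q op {u, z, z}) op S \<theta> (N z) \<and> (\<forall>s\<in>S. N z u s = s)" if "z \<in> Q" for z
    unfolding N_def by (rule someI_ex[OF trivial_on_Sg[OF that that]])
  have "trivializes (Sg Q op {u, x, y}) op S \<theta> (\<lambda>z. N z z)" if xy: "x \<in> Q" "y \<in> Q" for x y
  proof -
    let ?P = "Sg Q op {u, x, y}"
    obtain \<gamma> where \<gamma>: "trivializes ?P op S \<theta> \<gamma>" "\<forall>s\<in>S. \<gamma> u s = s"
      using trivial_on_Sg[OF xy] by blast
    have P_sub: "?P \<subseteq> Q"
      using u xy by (intro Sg_subset[OF q]) auto
    have agree: "N z z s = \<gamma> z s" if z: "z \<in> ?P" and s: "s \<in> S" for z s
    proof -
      have "{u, z, z} \<subseteq> ?P"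
        using z Sg.Sg_gen[of u "{u, x, y}"] by simp
      then have sub: "Sg Q op {u, z, z} \<subseteq> ?P"
        by (rule Sg_minimal)
      have zQ: "z \<in> Q" using P_sub z by blast
      have Sg_u: "u \<in> Sg Q op {u, z, z}" and Sg_z: "z \<in> Sg Q op {u, z, z}"
        by (simp_all add: Sg.Sg_gen)
      from N[OF zQ] have Nz: "trivializes (Sg Q op {u, z, z}) op S \<theta> (N z)" "\<And>s. s \<in> S \<Longrightarrow> N z u s = s"
        by auto
      show ?thesis
        using normalized_trivialization_unique[OF conn[OF zQ] Sg_u Nz trivializes_subset[OF \<gamma>(1) sub] _ Sg_z s] \<gamma>(2)
        by blast
    qed
    show ?thesis
      by (rule trivializes_cong[OF \<gamma>(1) agree Sg.Sg_op])
  qed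
  then have "trivializes Q op S \<theta> (\<lambda>z. N z z)"
    unfolding trivializes_def by (meson Sg.Sg_gen insertCI)
  then show ?thesis by blast
qed

theorem proposition3p6:
  fixes Q :: "'a set" and op :: "'a \<Rightarrow> 'a \<Rightarrow> 'a" and u :: 'a
  assumes "latin Q op"
    and "u \<in> Q"
    and "\<forall>x\<in>Q. \<forall>y\<in>Q. simply_connected TYPE('s) (Sg Q op {u, x, y}) op"
  shows "simply_connected TYPE('s) Q op"
proof -
  have q: "quandle Q op" using assms(1) by (simp add: latin_def)
  have "cohomologous_trivial Q op S \<theta>" if cocycle: "quandle_cocycle Q op S \<theta>" for S :: "'s set" and \<theta>
  proof -
    have "\<exists>\<Gamma>. trivializes Q op S \<theta> \<Gamma>"
    proof (rule trivializes_from_subquandles[OF q assms(2)])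
      show "connected_quandle (Sg Q op {u, z, z}) op" if "z \<in> Q" for z
        using assms(3) that unfolding simply_connected_def by blast
      fix x y assume xy: "x \<in> Q" "y \<in> Q"
      then have "Sg Q op {u, x, y} \<subseteq> Q"
        using assms(2) by (intro Sg_subset[OF q]) auto
      with xy show "\<exists>\<gamma>. trivializes (Sg Q op {u, x, y}) op S \<theta> \<gamma> \<and> (\<forall>s\<in>S. \<gamma> u s = s)"
        using assms(3) quandle_cocycle_subset[OF cocycle]
        by (intro simply_connected_normalized_trivialization) (auto intro: Sg.Sg_gen)
    qed
    then show ?thesis by (simp add: cohomologous_trivial_iff_trivializes)
  qed
  then show ?thesis
    using latin_connected_quandle[OF assms(1)] by (simp add: simply_connected_def)
qed

end
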